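(* Let $R_\alpha=X^\alpha+X^{(\rho,\alpha^\vee)\alpha}B_\alpha$ for $\alpha\in\Phi$. Then for every $i\in\{1,\dots,r\}$ and $\beta\in\Phi$: (a) $R_{\alpha_i}T_i=T_iR_{-\alpha_i}+R_{\alpha_i}$; (b) $R_{-\alpha_i}T_i=T_iR_{\alpha_i}-R_{\alpha_i}$; (c) $R_\beta T_i=T_iR_{-\alpha_i}R_{s_i(\beta)}R_{\alpha_i}$ if $\beta\ne\pm\alpha_i$.
   Context: $G$ connected, simply connected, simple complex Lie group, Borel $B\supset T$, irreducible root system $\Phi$, positive roots $\Phi^+$, simple roots $\alpha_1,\dots,\alpha_r$, coroots $\alpha^\vee=2\alpha/(\alpha,\alpha)$, Weyl group $W$ with length $\ell$ and simple reflections $s_i$, weight lattice $\Lambda$, $\rho$ the sum of fundamental weights, $\theta^\vee$ the highest coroot, $h=(\rho,\theta^\vee)+1$. $K_T(G/B)$ is a free $\mathbb Z[X]$-module ($\mathbb Z[X]$ = group algebra of $\Lambda$) with basis $[\mathcal O_w]:=*[\mathcal O_{X_w}]$, $w\in W$. $\mathbb Z[\tilde X]$ is the group algebra of $\Lambda/h$ (basis $x^{\lambda/h}$) and $\tilde K_T(G/B)=K_T(G/B)\otimes_{\mathbb Z[X]}\mathbb Z[\tilde X]$ with basis $[\mathcal O_w]$. All operators below are $\mathbb Z[\tilde X]$-linear on $\tilde K_T(G/B)$: for $\alpha\in\Phi^+$, $B_\alpha[\mathcal O_w]=[\mathcal O_{ws_\alpha}]$ if $\ell(ws_\alpha)=\ell(w)-1$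 and $0$ otherwise, $B_{-\alpha}:=-B_\alpha$; $X^\lambda[\mathcal O_w]=x^{w(\lambda)/h}[\mathcal O_w]$; the Demazure operator $T_i$ acts by $T_i[\mathcal O_w]=[\mathcal O_{ws_i}]$ if $\ell(ws_i)=\ell(w)+1$ and $T_i[\mathcal O_w]=[\mathcal O_w]$ if $\ell(ws_i)=\ell(w)-1$ (this is the operator induced by $f\mapsto(f-e^{-\alpha_i}s_i(f))/(1-e^{-\alpha_i})$). *)

theory Defs
  imports "HOL-Analysis.Analysis" "HOL-Library.Poly_Mapping" "HOL-Library.Function_Algebras"
begin

definition coroot :: "'a::real_inner \<Rightarrow> 'a" where
  "coroot \<alpha> = (2 / (\<alpha> \<bullet> \<alpha>)) *\<^sub>R \<alpha>"

definition sref :: "'a::real_inner \<Rightarrow> 'a \<Rightarrow> 'a" where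
  "sref \<alpha> v = v - (v \<bullet> coroot \<alpha>) *\<^sub>R \<alpha>"

definition root_system :: "'a::euclidean_space set \<Rightarrow> bool" where
  "root_system \<Phi> \<longleftrightarrow> finite \<Phi> \<and> 0 \<notin> \<Phi> \<and> span \<Phi> = UNIV
     \<and> (\<forall>\<alpha>\<in>\<Phi>. sref \<alpha> ` \<Phi> = \<Phi>)
     \<and> (\<forall>\<alpha>\<in>\<Phi>. \<forall>\<beta>\<in>\<Phi>. \<beta> \<bullet> coroot \<alpha> \<in> \<int>)
     \<and> (\<forall>\<alpha>\<in>\<Phi>. \<forall>c::real. c *\<^sub>R \<alpha> \<in> \<Phi> \<longrightarrow> c = 1 \<or> c = -1)"

definition irreducible_rs :: "'a::euclidean_space set \<Rightarrow> bool" where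
  "irreducible_rs \<Phi> \<longleftrightarrow> \<Phi> \<noteq> {} \<and>
     \<not> (\<exists>\<Phi>1 \<Phi>2. \<Phi>1 \<noteq> {} \<and> \<Phi>2 \<noteq> {} \<and> \<Phi> = \<Phi>1 \<union> \<Phi>2
        \<and> (\<forall>\<alpha>\<in>\<Phi>1. \<forall>\<beta>\<in>\<Phi>2. \<alpha> \<bullet> \<beta> = 0))"

definition is_base :: "'a::euclidean_space set \<Rightarrow> (nat \<Rightarrow> 'a) \<Rightarrow> nat \<Rightarrow> bool" where
  "is_base \<Phi> \<alpha> r \<longleftrightarrow> (\<forall>i\<in>{1..r}. \<alpha> i \<in> \<Phi>) \<and> inj_on \<alpha> {1..r}
     \<and> independent (\<alpha> ` {1..r})
     \<and> (\<forall>\<beta>\<in>\<Phi>. \<exists>k::nat \<Rightarrow> int. \<beta> = (\<Sum>i=1..r. of_int (k i) *\<^sub>R \<alpha> i)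
           \<and> ((\<forall>i\<in>{1..r}. k i \<ge> 0) \<or> (\<forall>i\<in>{1..r}. k i \<le> 0)))"

definition pos_roots :: "'a::euclidean_space set \<Rightarrow> (nat \<Rightarrow> 'a) \<Rightarrow> nat \<Rightarrow> 'a set" where
  "pos_roots \<Phi> \<alpha> r = {\<beta>\<in>\<Phi>. \<exists>k::nat \<Rightarrow> int. \<beta> = (\<Sum>i=1..r. of_int (k i) *\<^sub>R \<alpha> i)
           \<and> (\<forall>i\<in>{1..r}. k i \<ge> 0)}"

inductive_set weyl_group :: "'a::euclidean_space set \<Rightarrow> ('a \<Rightarrow> 'a) set" for \<Phi> where
  id_in: "id \<in> weyl_group \<Phi>"
| refl_in: "w \<in> weyl_group \<Phi> \<Longrightarrow> \<beta> \<in> \<Phi> \<Longrightarrow> w \<circ> sref \<beta> \<in> weyl_group \<Phi>"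

definition simple_word :: "(nat \<Rightarrow> 'a::real_inner) \<Rightarrow> nat list \<Rightarrow> 'a \<Rightarrow> 'a" where
  "simple_word \<alpha> is = foldr (\<lambda>i w. sref (\<alpha> i) \<circ> w) is id"

definition weyl_length :: "(nat \<Rightarrow> 'a::real_inner) \<Rightarrow> nat \<Rightarrow> ('a \<Rightarrow> 'a) \<Rightarrow> nat" where
  "weyl_length \<alpha> r w = (LEAST n. \<exists>is. length is = n \<and> set is \<subseteq> {1..r} \<and> w = simple_word \<alpha> is)"

definition fund_weight :: "(nat \<Rightarrow> 'a::euclidean_space) \<Rightarrow> nat \<Rightarrow> nat \<Rightarrow> 'a" where
  "fund_weight \<alpha> r i = (THE \<omega>. \<forall>j\<in>{1..r}. \<omega> \<bullet> coroot (\<alpha> j) = (if i = j then 1 else 0))"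

definition rho :: "(nat \<Rightarrow> 'a::euclidean_space) \<Rightarrow> nat \<Rightarrow> 'a" where
  "rho \<alpha> r = (\<Sum>i=1..r. fund_weight \<alpha> r i)"

definition highest_coroot :: "'a::euclidean_space set \<Rightarrow> (nat \<Rightarrow> 'a) \<Rightarrow> nat \<Rightarrow> 'a" where
  "highest_coroot \<Phi> \<alpha> r = (THE t. t \<in> coroot ` \<Phi> \<and>
     (\<forall>\<beta>\<in>\<Phi>. \<exists>k::nat \<Rightarrow> int. (\<forall>i\<in>{1..r}. k i \<ge> 0)
        \<and> t - coroot \<beta> = (\<Sum>i=1..r. of_int (k i) *\<^sub>R coroot (\<alpha> i))))"

definition coxeter_number :: "'a::euclidean_space set \<Rightarrow> (nat \<Rightarrow> 'a) \<Rightarrow> nat \<Rightarrow> real" where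
  "coxeter_number \<Phi> \<alpha> r = rho \<alpha> r \<bullet> highest_coroot \<Phi> \<alpha> r + 1"

text \<open>Coefficient ring: group algebra, monomial \<open>x^\<mu>\<close> = \<open>Poly_Mapping.single \<mu> 1\<close>;
  the ring \<open>Z[X~]\<close> (exponents in \<open>\<Lambda>/h\<close>) is a subring of this.\<close>
type_synonym 'a coeff = "'a \<Rightarrow>\<^sub>0 int"

definition xmon :: "'a \<Rightarrow> 'a coeff" where
  "xmon \<mu> = Poly_Mapping.single \<mu> 1"

text \<open>Elements of the module: coefficient functions \<open>F\<close>, i.e. \<open>\<Sum>_{w\<in>W} F w [O_w]\<close>.\<close>
type_synonym 'a kmod = "('a \<Rightarrow> 'a) \<Rightarrow> 'a coeff"

definition cbasis :: "'a coeff \<Rightarrow> ('a \<Rightarrow> 'a) \<Rightarrow> 'a kmod" where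
  "cbasis c v = (\<lambda>u. if u = v then c else 0)"

definition lin_ext :: "'a::euclidean_space set \<Rightarrow> (('a \<Rightarrow> 'a) \<Rightarrow> 'a kmod) \<Rightarrow> 'a kmod \<Rightarrow> 'a kmod" where
  "lin_ext \<Phi> act F = (\<lambda>u. \<Sum>w\<in>weyl_group \<Phi>. F w * act w u)"

definition Bpos :: "'a::euclidean_space set \<Rightarrow> (nat \<Rightarrow> 'a) \<Rightarrow> nat \<Rightarrow> 'a \<Rightarrow> 'a kmod \<Rightarrow> 'a kmod" where
  "Bpos \<Phi> \<alpha> r \<gamma> = lin_ext \<Phi> (\<lambda>w.
     if weyl_length \<alpha> r (w \<circ> sref \<gamma>) + 1 = weyl_length \<alpha> r w
     then cbasis 1 (w \<circ> sref \<gamma>) else (\<lambda>_. 0))"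

definition Bop :: "'a::euclidean_space set \<Rightarrow> (nat \<Rightarrow> 'a) \<Rightarrow> nat \<Rightarrow> 'a \<Rightarrow> 'a kmod \<Rightarrow> 'a kmod" where
  "Bop \<Phi> \<alpha> r \<beta> = (if \<beta> \<in> pos_roots \<Phi> \<alpha> r then Bpos \<Phi> \<alpha> r \<beta> else - Bpos \<Phi> \<alpha> r (- \<beta>))"

definition Xop :: "'a::euclidean_space set \<Rightarrow> (nat \<Rightarrow> 'a) \<Rightarrow> nat \<Rightarrow> 'a \<Rightarrow> 'a kmod \<Rightarrow> 'a kmod" where
  "Xop \<Phi> \<alpha> r \<mu> = lin_ext \<Phi> (\<lambda>w.
     cbasis (xmon ((1 / coxeter_number \<Phi> \<alpha> r) *\<^sub>R w \<mu>)) w)"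

definition Top :: "'a::euclidean_space set \<Rightarrow> (nat \<Rightarrow> 'a) \<Rightarrow> nat \<Rightarrow> nat \<Rightarrow> 'a kmod \<Rightarrow> 'a kmod" where
  "Top \<Phi> \<alpha> r i = lin_ext \<Phi> (\<lambda>w.
     if weyl_length \<alpha> r (w \<circ> sref (\<alpha> i)) = weyl_length \<alpha> r w + 1
     then cbasis 1 (w \<circ> sref (\<alpha> i))
     else if weyl_length \<alpha> r (w \<circ> sref (\<alpha> i)) + 1 = weyl_length \<alpha> r w
     then cbasis 1 w else (\<lambda>_. 0))"

definition Rop :: "'a::euclidean_space set \<Rightarrow> (nat \<Rightarrow> 'a) \<Rightarrow> nat \<Rightarrow> 'a \<Rightarrow> 'a kmod \<Rightarrow> 'a kmod" where
  "Rop \<Phi> \<alpha> r \<beta> = Xop \<Phi> \<alpha> r \<beta>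
     + (Xop \<Phi> \<alpha> r ((rho \<alpha> r \<bullet> coroot \<beta>) *\<^sub>R \<beta>) \<circ> Bop \<Phi> \<alpha> r \<beta>)"

end

theory Submission
  imports Defs
begin

(* Each operator is the linear extension of an action on the basis [O_w], so it suffices to
   compare both sides on every [O_w].  Write s = s_i.  By the exchange property
   l(w s\<^sub>\<gamma>) < l(w) \<longleftrightarrow> w(\<gamma>) < 0 (for \<gamma> > 0), exactly one of l(ws) = l(w) + 1 and
   l(ws) + 1 = l(w) holds, and X^\<mu> acts on [O_w] by the monomial x^(w(\<mu>)/h), which is
   multiplicative in \<mu>.  With this, (a) and (b) are direct computations.  For (c) put
   \<gamma> = s \<beta>; then s\<^sub>\<beta> = s s\<^sub>\<gamma> s, so both sides involve the same basis vectors.  Their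
   monomials agree because (\<rho>, \<alpha>\<^sub>i\<^sup>\<or>) = 1 gives (\<rho>, \<beta>\<^sup>\<or>) = (\<rho>, \<gamma>\<^sup>\<or>) - (\<gamma>\<^sup>\<or>, \<alpha>\<^sub>i), and their
   length conditions agree because s permutes the positive roots other than \<alpha>\<^sub>i.  When
   l(ws) < l(w), identity (a) at ws reduces (c) to the opposite case.
   Irreducibility of the root system and the value of h are never used. *)

section \<open>Reflections\<close>

lemma coroot_uminus [simp]: "coroot (- a) = - coroot (a::'a::real_inner)"
  by (simp add: coroot_def)

lemma sref_uminus [simp]: "sref (- a) = sref (a::'a::real_inner)"
  by (auto simp: sref_def coroot_def fun_eq_iff)

lemma linear_sref: "linear (sref (a::'a::real_inner))"
  by (rule linearI) (auto simp: sref_def inner_add_left algebra_simps)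

lemma sref_self: "(a::'a::real_inner) \<noteq> 0 \<Longrightarrow> sref a a = - a"
  by (simp add: sref_def coroot_def scaleR_2)

lemma sref_sref [simp]: "sref a (sref a x) = (x::'a::real_inner)"
  by (cases "a = 0") (simp_all add: sref_def coroot_def algebra_simps)

lemma sref_comp_sref [simp]: "sref a \<circ> sref a = (id :: 'a::real_inner \<Rightarrow> 'a)"
  by (simp add: fun_eq_iff)

lemma inner_sref_sref: "sref a x \<bullet> sref a y = x \<bullet> (y::'a::real_inner)"
proof (cases "a = 0")
  case False
  then show ?thesis
    by (simp add: sref_def coroot_def inner_diff_right algebra_simps inner_commute)
qed (simp add: sref_def coroot_def)

lemma orthogonal_transformation_sref: "orthogonal_transformation (sref (a::'a::real_inner))"
  by (simp add: orthogonal_transformation_def linear_sref inner_sref_sref)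

lemma coroot_orthogonal_transformation:
  "orthogonal_transformation f \<Longrightarrow> coroot (f a) = f (coroot a)"
  by (simp add: coroot_def orthogonal_transformation_def linear_cmul)

lemma orthogonal_transformation_comp_sref:
  assumes f: "orthogonal_transformation f"
  shows "f \<circ> sref a = sref (f a) \<circ> f"
proof -
  have "f x \<bullet> f y = x \<bullet> y" for x y
    using f by (simp add: orthogonal_transformation_def)
  then show ?thesis
    using orthogonal_transformation_linear[OF f]
    by (auto simp: fun_eq_iff sref_def coroot_orthogonal_transformation[OF f] linear_diff linear_cmul)
qed

lemma sref_sref_conj: "sref (sref a b) = sref a \<circ> sref b \<circ> sref (a::'a::real_inner)"
proof -
  have "sref a \<circ> sref b = sref (sref a b) \<circ> sref a"
    by (rule orthogonal_transformation_comp_sref[OF orthogonal_transformation_sref])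
  then have "sref a \<circ> sref b \<circ> sref a = sref (sref a b) \<circ> (sref a \<circ> sref a)"
    by (simp add: comp_assoc)
  then show ?thesis
    by simp
qed

lemma comp_sref_sref_conj: "f \<circ> sref a \<circ> sref (sref a b) = f \<circ> sref b \<circ> sref (a::'a::real_inner)"
proof -
  have "f \<circ> sref a \<circ> sref (sref a b) = f \<circ> (sref a \<circ> sref a) \<circ> sref b \<circ> sref a"
    by (simp only: sref_sref_conj comp_assoc)
  then show ?thesis
    by simp
qed

lemma simple_word_Nil [simp]: "simple_word \<alpha> [] = id"
  by (simp add: simple_word_def)

lemma simple_word_Cons [simp]: "simple_word \<alpha> (i # is) = sref (\<alpha> i) \<circ> simple_word \<alpha> is"
  by (simp add: simple_word_def)

lemma simple_word_append: "simple_word \<alpha> (is @ js) = simple_word \<alpha> is \<circ> simple_word \<alpha> js"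
  by (induction "is") auto

lemma orthogonal_transformation_simple_word: "orthogonal_transformation (simple_word \<alpha> is)"
proof (induction "is")
  case (Cons i "is")
  then show ?case
    unfolding simple_word_Cons
    by (rule orthogonal_transformation_compose[OF orthogonal_transformation_sref])
qed (simp add: id_def)

lemma orthogonal_transformation_weyl_group: "w \<in> weyl_group \<Phi> \<Longrightarrow> orthogonal_transformation w"
proof (induction rule: weyl_group.induct)
  case (refl_in w \<beta>)
  show ?case
    by (rule orthogonal_transformation_compose[OF refl_in.IH orthogonal_transformation_sref])
qed (simp add: id_def)

lemma simple_word_Cons_comp_sref:
  assumes "simple_word \<alpha> is d = \<alpha> i"
  shows "simple_word \<alpha> (i # is) \<circ> sref d = simple_word \<alpha> is"
proof -
  have "simple_word \<alpha> (i # is) \<circ> sref d = (sref (\<alpha> i) \<circ> sref (\<alpha> i)) \<circ> simple_word \<alpha> is"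
    using assms
    by (simp only: simple_word_Cons comp_assoc
        orthogonal_transformation_comp_sref[OF orthogonal_transformation_simple_word])
  then show ?thesis
    by (simp only: sref_comp_sref id_comp)
qed

lemma weyl_length_le: "set is \<subseteq> {1..r} \<Longrightarrow> weyl_length \<alpha> r (simple_word \<alpha> is) \<le> length is"
  unfolding weyl_length_def by (rule Least_le) (rule exI[of _ "is"], simp)

section \<open>Linear extensions of actions on the basis\<close>

lemma lin_ext_add: "lin_ext \<Phi> A (F + G) = lin_ext \<Phi> A F + lin_ext \<Phi> A G"
  by (simp add: lin_ext_def fun_eq_iff distrib_right sum.distrib)

lemma lin_ext_zero: "lin_ext \<Phi> A 0 = 0"
  by (simp add: lin_ext_def fun_eq_iff)

lemma lin_ext_comp: "lin_ext \<Phi> A \<circ> lin_ext \<Phi> B = lin_ext \<Phi> (\<lambda>w. lin_ext \<Phi> A (B w))"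
proof (intro ext)
  fix F u
  have "(lin_ext \<Phi> A \<circ> lin_ext \<Phi> B) F u
      = (\<Sum>v\<in>weyl_group \<Phi>. \<Sum>w\<in>weyl_group \<Phi>. F w * (B w v * A v u))"
    by (simp add: lin_ext_def sum_distrib_right mult.assoc)
  also have "\<dots> = (\<Sum>w\<in>weyl_group \<Phi>. \<Sum>v\<in>weyl_group \<Phi>. F w * (B w v * A v u))"
    by (rule sum.swap)
  also have "\<dots> = lin_ext \<Phi> (\<lambda>w. lin_ext \<Phi> A (B w)) F u"
    by (simp add: lin_ext_def sum_distrib_left)
  finally show "(lin_ext \<Phi> A \<circ> lin_ext \<Phi> B) F u = lin_ext \<Phi> (\<lambda>w. lin_ext \<Phi> A (B w)) F u" .
qed

lemma lin_ext_cbasis: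
  assumes "finite (weyl_group \<Phi>)" and "v \<in> weyl_group \<Phi>"
  shows "lin_ext \<Phi> A (cbasis c v) = (\<lambda>u. c * A v u)"
proof
  fix u
  have "lin_ext \<Phi> A (cbasis c v) u = (\<Sum>w\<in>weyl_group \<Phi>. if w = v then c * A v u else 0)"
    unfolding lin_ext_def by (rule sum.cong) (simp_all add: cbasis_def)
  then show "lin_ext \<Phi> A (cbasis c v) u = c * A v u"
    using assms by simp
qed

definition is_lin_ext :: "'a::euclidean_space set \<Rightarrow> ('a kmod \<Rightarrow> 'a kmod) \<Rightarrow> bool" where
  "is_lin_ext \<Phi> P \<longleftrightarrow> (\<exists>A. P = lin_ext \<Phi> A)"

lemma is_lin_ext_lin_ext: "is_lin_ext \<Phi> (lin_ext \<Phi> A)"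
  by (auto simp: is_lin_ext_def)

lemma is_lin_ext_comp: "is_lin_ext \<Phi> P \<Longrightarrow> is_lin_ext \<Phi> Q \<Longrightarrow> is_lin_ext \<Phi> (P \<circ> Q)"
  unfolding is_lin_ext_def using lin_ext_comp by blast

lemma is_lin_ext_add: "is_lin_ext \<Phi> P \<Longrightarrow> is_lin_ext \<Phi> Q \<Longrightarrow> is_lin_ext \<Phi> (P + Q)"
proof -
  assume "is_lin_ext \<Phi> P" "is_lin_ext \<Phi> Q"
  then obtain A B where "P = lin_ext \<Phi> A" "Q = lin_ext \<Phi> B"
    by (auto simp: is_lin_ext_def)
  then have "P + Q = lin_ext \<Phi> (\<lambda>w u. A w u + B w u)"
    by (simp add: lin_ext_def fun_eq_iff distrib_left sum.distrib)
  then show ?thesis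
    by (auto simp: is_lin_ext_def)
qed

lemma is_lin_ext_uminus: "is_lin_ext \<Phi> P \<Longrightarrow> is_lin_ext \<Phi> (- P)"
proof -
  assume "is_lin_ext \<Phi> P"
  then obtain A where "P = lin_ext \<Phi> A"
    by (auto simp: is_lin_ext_def)
  then have "- P = lin_ext \<Phi> (\<lambda>w u. - A w u)"
    by (simp add: lin_ext_def fun_eq_iff sum_negf)
  then show ?thesis
    by (auto simp: is_lin_ext_def)
qed

lemma is_lin_ext_diff: "is_lin_ext \<Phi> P \<Longrightarrow> is_lin_ext \<Phi> Q \<Longrightarrow> is_lin_ext \<Phi> (P - Q)"
  using is_lin_ext_add[of \<Phi> P "- Q"] is_lin_ext_uminus[of \<Phi> Q] by simp

lemma is_lin_ext_add_apply: "is_lin_ext \<Phi> P \<Longrightarrow> P (F + G) = P F + P G"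
  unfolding is_lin_ext_def using lin_ext_add by blast

lemma is_lin_ext_if_zero_apply:
  "is_lin_ext \<Phi> P \<Longrightarrow> P (if C then F else 0) = (if C then P F else 0)"
  unfolding is_lin_ext_def using lin_ext_zero by auto

text \<open>If the Weyl group were infinite, every linear extension would be the zero operator,
  so the finiteness of the Weyl group never has to be established.\<close>
lemma is_lin_ext_eqI:
  assumes "is_lin_ext \<Phi> P" and "is_lin_ext \<Phi> Q"
    and "\<And>w. finite (weyl_group \<Phi>) \<Longrightarrow> w \<in> weyl_group \<Phi> \<Longrightarrow> P (cbasis 1 w) = Q (cbasis 1 w)"
  shows "P = Q"
proof -
  obtain A B where P: "P = lin_ext \<Phi> A" and Q: "Q = lin_ext \<Phi> B"
    using assms(1,2) by (auto simp: is_lin_ext_def)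
  show ?thesis
  proof (cases "finite (weyl_group \<Phi>)")
    case True
    have "A w = B w" if "w \<in> weyl_group \<Phi>" for w
      using assms(3)[OF True that] by (simp add: P Q lin_ext_cbasis[OF True that])
    then show ?thesis
      by (auto simp: P Q lin_ext_def fun_eq_iff intro!: sum.cong)
  qed (simp add: P Q lin_ext_def fun_eq_iff)
qed

lemma cbasis_add: "cbasis x v + cbasis y v = cbasis (x + y) v"
  by (simp add: cbasis_def fun_eq_iff)

lemma cbasis_uminus: "- cbasis x v = cbasis (- x) v"
  by (simp add: cbasis_def fun_eq_iff)

lemma cbasis_zero [simp]: "cbasis 0 v = 0"
  by (simp add: cbasis_def fun_eq_iff)

lemma cbasis_mult: "(\<lambda>u. c * cbasis x v u) = cbasis (c * x) v"
  by (simp add: cbasis_def fun_eq_iff)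

lemma is_lin_ext_Xop: "is_lin_ext \<Phi> (Xop \<Phi> \<alpha> r \<mu>)"
  unfolding Xop_def by (rule is_lin_ext_lin_ext)

lemma is_lin_ext_Top: "is_lin_ext \<Phi> (Top \<Phi> \<alpha> r i)"
  unfolding Top_def by (rule is_lin_ext_lin_ext)

lemma is_lin_ext_Bop: "is_lin_ext \<Phi> (Bop \<Phi> \<alpha> r \<beta>)"
  unfolding Bop_def Bpos_def by (auto intro: is_lin_ext_lin_ext is_lin_ext_uminus)

lemma is_lin_ext_Rop: "is_lin_ext \<Phi> (Rop \<Phi> \<alpha> r \<beta>)"
  unfolding Rop_def by (intro is_lin_ext_add is_lin_ext_comp is_lin_ext_Xop is_lin_ext_Bop)

section \<open>Positive roots and the Weyl group\<close>

locale based_root_system =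
  fixes \<Phi> :: "'a::euclidean_space set" and \<alpha> :: "nat \<Rightarrow> 'a" and r :: nat
  assumes root_system: "root_system \<Phi>" and base: "is_base \<Phi> \<alpha> r"
begin

abbreviation "Pos \<equiv> pos_roots \<Phi> \<alpha> r"
abbreviation "W \<equiv> weyl_group \<Phi>"
abbreviation "L \<equiv> weyl_length \<alpha> r"

lemma root_nonzero: "b \<in> \<Phi> \<Longrightarrow> b \<noteq> 0"
  using root_system by (auto simp: root_system_def)

lemma sref_root: "a \<in> \<Phi> \<Longrightarrow> b \<in> \<Phi> \<Longrightarrow> sref a b \<in> \<Phi>"
  using root_system unfolding root_system_def by blast

lemma root_coroot_Ints: "a \<in> \<Phi> \<Longrightarrow> b \<in> \<Phi> \<Longrightarrow> b \<bullet> coroot a \<in> \<int>"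
  using root_system unfolding root_system_def by blast

lemma root_multiple: "a \<in> \<Phi> \<Longrightarrow> c *\<^sub>R a \<in> \<Phi> \<Longrightarrow> c = 1 \<or> c = -1"
  using root_system unfolding root_system_def by blast

lemma uminus_root: "b \<in> \<Phi> \<Longrightarrow> - b \<in> \<Phi>"
  using sref_root[of b b] sref_self[OF root_nonzero] by auto

lemma weyl_group_root: "w \<in> W \<Longrightarrow> b \<in> \<Phi> \<Longrightarrow> w b \<in> \<Phi>"
  by (induction arbitrary: b rule: weyl_group.induct) (simp_all add: sref_root)

lemma simple_root: "i \<in> {1..r} \<Longrightarrow> \<alpha> i \<in> \<Phi>"
  using base by (simp add: is_base_def)

lemma simple_root_nonzero: "i \<in> {1..r} \<Longrightarrow> \<alpha> i \<noteq> 0"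
  using root_nonzero[OF simple_root] .

lemma simple_roots_inj: "inj_on \<alpha> {1..r}"
  using base by (simp add: is_base_def)

lemma simple_roots_independent: "independent (\<alpha> ` {1..r})"
  using base by (simp add: is_base_def)

lemma root_simple_coeffs:
  "b \<in> \<Phi> \<Longrightarrow> \<exists>k::nat \<Rightarrow> int. b = (\<Sum>j=1..r. of_int (k j) *\<^sub>R \<alpha> j)
     \<and> ((\<forall>j\<in>{1..r}. k j \<ge> 0) \<or> (\<forall>j\<in>{1..r}. k j \<le> 0))"
  using base by (simp add: is_base_def)

lemma simple_coeffs_unique:
  assumes eq: "(\<Sum>j=1..r. of_int (c j) *\<^sub>R \<alpha> j) = (\<Sum>j=1..r. of_int (d j) *\<^sub>R \<alpha> j)"
    and j: "j \<in> {1..r}"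
  shows "c j = d j"
proof (rule ccontr)
  assume ne: "c j \<noteq> d j"
  define idx where "idx = the_inv_into {1..r} \<alpha>"
  define u where "u v = real_of_int (c (idx v) - d (idx v))" for v
  have idx: "idx (\<alpha> k) = k" if "k \<in> {1..r}" for k
    unfolding idx_def using the_inv_into_f_f[OF simple_roots_inj that] .
  have "(\<Sum>v\<in>\<alpha> ` {1..r}. u v *\<^sub>R v) = (\<Sum>k=1..r. u (\<alpha> k) *\<^sub>R \<alpha> k)"
    by (rule sum.reindex[OF simple_roots_inj, unfolded comp_def])
  also have "\<dots> = (\<Sum>k=1..r. of_int (c k - d k) *\<^sub>R \<alpha> k)"
    by (rule sum.cong) (simp_all add: u_def idx)
  also have "\<dots> = 0"
    using eq by (simp add: scaleR_diff_left sum_subtractf)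
  finally have "(\<Sum>v\<in>\<alpha> ` {1..r}. u v *\<^sub>R v) = 0" .
  moreover have "u (\<alpha> j) \<noteq> 0"
    using ne idx[OF j] by (simp add: u_def)
  ultimately have "\<exists>u. (\<exists>v\<in>\<alpha> ` {1..r}. u v \<noteq> 0) \<and> (\<Sum>v\<in>\<alpha> ` {1..r}. u v *\<^sub>R v) = 0"
    using j by blast
  then have "dependent (\<alpha> ` {1..r})"
    using dependent_finite[of "\<alpha> ` {1..r}"] by simp
  then show False
    using simple_roots_independent by simp
qed

lemma pos_root_root: "b \<in> Pos \<Longrightarrow> b \<in> \<Phi>"
  by (simp add: pos_roots_def)

lemma pos_rootsI:
  "b \<in> \<Phi> \<Longrightarrow> b = (\<Sum>j=1..r. of_int (k j) *\<^sub>R \<alpha> j) \<Longrightarrow> \<forall>j\<in>{1..r}. k j \<ge> 0 \<Longrightarrow> b \<in> Pos"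
  by (auto simp: pos_roots_def)

lemma pos_rootsE:
  assumes "b \<in> Pos"
  obtains k where "b = (\<Sum>j=1..r. of_int (k j) *\<^sub>R \<alpha> j)" and "\<forall>j\<in>{1..r}. k j \<ge> 0"
  using assms by (auto simp: pos_roots_def)

lemma root_pos_or_neg: "b \<in> \<Phi> \<Longrightarrow> b \<in> Pos \<or> - b \<in> Pos"
proof -
  assume b: "b \<in> \<Phi>"
  obtain k where k: "b = (\<Sum>j=1..r. of_int (k j) *\<^sub>R \<alpha> j)"
    and sign: "(\<forall>j\<in>{1..r}. k j \<ge> 0) \<or> (\<forall>j\<in>{1..r}. k j \<le> 0)"
    using root_simple_coeffs[OF b] by blast
  have "- b = (\<Sum>j=1..r. of_int (- k j) *\<^sub>R \<alpha> j)"
    using k by (simp add: sum_negf[symmetric])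
  then show ?thesis
    using sign pos_rootsI[OF b k] pos_rootsI[OF uminus_root[OF b], of "\<lambda>j. - k j"] by auto
qed

lemma pos_root_uminus_not_pos: "b \<in> Pos \<Longrightarrow> - b \<notin> Pos"
proof
  assume b: "b \<in> Pos" and nb: "- b \<in> Pos"
  obtain k where k: "b = (\<Sum>j=1..r. of_int (k j) *\<^sub>R \<alpha> j)" "\<forall>j\<in>{1..r}. k j \<ge> 0"
    using b by (rule pos_rootsE)
  obtain m where m: "- b = (\<Sum>j=1..r. of_int (m j) *\<^sub>R \<alpha> j)" "\<forall>j\<in>{1..r}. m j \<ge> 0"
    using nb by (rule pos_rootsE)
  have "(\<Sum>j=1..r. of_int (k j + m j) *\<^sub>R \<alpha> j)
      = (\<Sum>j=1..r. of_int (k j) *\<^sub>R \<alpha> j) + (\<Sum>j=1..r. of_int (m j) *\<^sub>R \<alpha> j)"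
    by (simp add: scaleR_add_left sum.distrib)
  also have "\<dots> = b + - b"
    by (simp only: k(1)[symmetric] m(1)[symmetric])
  also have "\<dots> = (\<Sum>j=1..r. of_int ((\<lambda>_. 0::int) j) *\<^sub>R \<alpha> j)"
    by simp
  finally have "(\<Sum>j=1..r. of_int (k j + m j) *\<^sub>R \<alpha> j) = (\<Sum>j=1..r. of_int ((\<lambda>_. 0::int) j) *\<^sub>R \<alpha> j)" .
  then have "k j = 0" if "j \<in> {1..r}" for j
    using simple_coeffs_unique[of "\<lambda>j. k j + m j" "\<lambda>_. 0" j] that k(2) m(2) by force
  then have "b = 0"
    using k(1) by simp
  then show False
    using root_nonzero[OF pos_root_root[OF b]] by simp
qed

lemma simple_root_pos:
  assumes i: "i \<in> {1..r}"
  shows "\<alpha> i \<in> Pos"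
proof (rule pos_rootsI[OF simple_root[OF i], where k = "\<lambda>j. if j = i then 1 else 0"])
  have "(\<Sum>j=1..r. of_int (if j = i then 1 else 0) *\<^sub>R \<alpha> j) = (\<Sum>j=1..r. if j = i then \<alpha> j else 0)"
    by (rule sum.cong) auto
  then show "\<alpha> i = (\<Sum>j=1..r. of_int (if j = i then 1 else 0) *\<^sub>R \<alpha> j)"
    using i by simp
qed simp

lemma neg_simple_root_not_pos: "i \<in> {1..r} \<Longrightarrow> - \<alpha> i \<notin> Pos"
  using pos_root_uminus_not_pos[OF simple_root_pos] .

lemma sref_simple_coeffs:
  assumes i: "i \<in> {1..r}" and b: "b \<in> \<Phi>" and k: "b = (\<Sum>j=1..r. of_int (k j) *\<^sub>R \<alpha> j)"
  obtains c where "b \<bullet> coroot (\<alpha> i) = of_int c"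
    and "sref (\<alpha> i) b = (\<Sum>j=1..r. of_int (k j - (if j = i then c else 0)) *\<^sub>R \<alpha> j)"
proof -
  obtain c where c: "b \<bullet> coroot (\<alpha> i) = of_int c"
    using root_coroot_Ints[OF simple_root[OF i] b] by (auto elim: Ints_cases)
  have "(\<Sum>j=1..r. of_int (k j - (if j = i then c else 0)) *\<^sub>R \<alpha> j)
      = (\<Sum>j=1..r. of_int (k j) *\<^sub>R \<alpha> j) - (\<Sum>j=1..r. if j = i then of_int c *\<^sub>R \<alpha> j else 0)"
    by (subst sum_subtractf[symmetric], rule sum.cong) (auto simp: scaleR_diff_left)
  also have "\<dots> = sref (\<alpha> i) b"
    using i k c by (simp add: sref_def)
  finally show ?thesis
    using that c by simp
qed

lemma sref_simple_pos_root:
  assumes i: "i \<in> {1..r}" and b: "b \<in> Pos" and ne: "b \<noteq> \<alpha> i"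
  shows "sref (\<alpha> i) b \<in> Pos"
proof (rule ccontr)
  assume not_pos: "sref (\<alpha> i) b \<notin> Pos"
  have bP: "b \<in> \<Phi>" and sP: "sref (\<alpha> i) b \<in> \<Phi>"
    using pos_root_root[OF b] sref_root[OF simple_root[OF i]] by auto
  obtain k where k: "b = (\<Sum>j=1..r. of_int (k j) *\<^sub>R \<alpha> j)" "\<forall>j\<in>{1..r}. k j \<ge> 0"
    using b by (rule pos_rootsE)
  obtain c where c: "sref (\<alpha> i) b = (\<Sum>j=1..r. of_int (k j - (if j = i then c else 0)) *\<^sub>R \<alpha> j)"
    using sref_simple_coeffs[OF i bP k(1)] by blast
  obtain m where m: "sref (\<alpha> i) b = (\<Sum>j=1..r. of_int (m j) *\<^sub>R \<alpha> j)" "\<forall>j\<in>{1..r}. m j \<le> 0"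
    using root_simple_coeffs[OF sP] not_pos pos_rootsI[OF sP] by blast
  have "k j = 0" if j: "j \<in> {1..r}" "j \<noteq> i" for j
  proof -
    have "m j = k j"
      using simple_coeffs_unique[OF trans[OF m(1)[symmetric] c] j(1)] j(2) by simp
    moreover have "0 \<le> k j" "m j \<le> 0"
      using k(2) m(2) j(1) by auto
    ultimately show ?thesis
      by simp
  qed
  then have "b = (\<Sum>j=1..r. if j = i then of_int (k i) *\<^sub>R \<alpha> i else 0)"
    unfolding k(1) by (intro sum.cong) auto
  then have bk: "b = of_int (k i) *\<^sub>R \<alpha> i"
    using i by simp
  then have "of_int (k i) *\<^sub>R \<alpha> i \<in> \<Phi>"
    using bP by simp
  then have "real_of_int (k i) = 1 \<or> real_of_int (k i) = -1"
    by (rule root_multiple[OF simple_root[OF i]])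
  moreover have "k i \<ge> 0"
    using k(2) i by blast
  ultimately show False
    using bk ne by auto
qed

lemma sref_simple_pos_root_iff:
  assumes i: "i \<in> {1..r}" and b: "b \<in> \<Phi>" and "b \<noteq> \<alpha> i" and "b \<noteq> - \<alpha> i"
  shows "sref (\<alpha> i) b \<in> Pos \<longleftrightarrow> b \<in> Pos"
proof
  assume pos: "sref (\<alpha> i) b \<in> Pos"
  have "sref (\<alpha> i) b \<noteq> \<alpha> i"
  proof
    assume "sref (\<alpha> i) b = \<alpha> i"
    then have "b = sref (\<alpha> i) (\<alpha> i)"
      by (metis sref_sref)
    then show False
      using assms(4) sref_self[OF simple_root_nonzero[OF i]] by simp
  qed
  then show "b \<in> Pos"
    using sref_simple_pos_root[OF i pos] by simp
next
  assume "b \<in> Pos"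
  then show "sref (\<alpha> i) b \<in> Pos"
    using sref_simple_pos_root[OF i] assms(3) by blast
qed

lemma simple_word_root: "set is \<subseteq> {1..r} \<Longrightarrow> b \<in> \<Phi> \<Longrightarrow> simple_word \<alpha> is b \<in> \<Phi>"
  by (induction "is" arbitrary: b) (simp_all add: sref_root simple_root)

lemma pos_root_inner_simple_pos:
  assumes b: "b \<in> Pos"
  obtains j where "j \<in> {1..r}" and "b \<bullet> \<alpha> j > 0"
proof -
  obtain k where k: "b = (\<Sum>j=1..r. of_int (k j) *\<^sub>R \<alpha> j)" "\<forall>j\<in>{1..r}. k j \<ge> 0"
    using b by (rule pos_rootsE)
  have "b \<bullet> b = (\<Sum>j=1..r. of_int (k j) * (b \<bullet> \<alpha> j))"
    by (subst (2) k(1)) (simp add: inner_sum_right)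
  moreover have "0 < b \<bullet> b"
    using root_nonzero[OF pos_root_root[OF b]] by simp
  moreover have "(\<Sum>j=1..r. of_int (k j) * (b \<bullet> \<alpha> j)) \<le> 0" if "\<forall>j\<in>{1..r}. b \<bullet> \<alpha> j \<le> 0"
    using that k(2) by (intro sum_nonpos) (simp add: mult_nonneg_nonpos)
  ultimately have "\<not> (\<forall>j\<in>{1..r}. b \<bullet> \<alpha> j \<le> 0)"
    by linarith
  then show ?thesis
    using that by (auto simp: not_le)
qed

lemma sref_simple_pos_root_height_less:
  assumes j: "j \<in> {1..r}" and b: "b \<in> Pos" "b \<noteq> \<alpha> j" "b \<bullet> \<alpha> j > 0"
    and k: "b = (\<Sum>i=1..r. of_int (k i) *\<^sub>R \<alpha> i)"
  obtains m where "sref (\<alpha> j) b = (\<Sum>i=1..r. of_int (m i) *\<^sub>R \<alpha> i)"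
    and "\<forall>i\<in>{1..r}. m i \<ge> 0" and "sum m {1..r} < sum k {1..r}"
proof -
  obtain c where c: "b \<bullet> coroot (\<alpha> j) = of_int c"
    and sk: "sref (\<alpha> j) b = (\<Sum>i=1..r. of_int (k i - (if i = j then c else 0)) *\<^sub>R \<alpha> i)"
    using sref_simple_coeffs[OF j pos_root_root[OF b(1)] k] by blast
  have "0 < b \<bullet> coroot (\<alpha> j)"
    using b(3) simple_root_nonzero[OF j] by (simp add: coroot_def)
  then have "c \<ge> 1"
    using c by simp
  obtain m where m: "sref (\<alpha> j) b = (\<Sum>i=1..r. of_int (m i) *\<^sub>R \<alpha> i)" "\<forall>i\<in>{1..r}. m i \<ge> 0"
    using sref_simple_pos_root[OF j b(1,2)] by (rule pos_rootsE)
  have "m i = k i - (if i = j then c else 0)" if "i \<in> {1..r}" for i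
    using simple_coeffs_unique[OF trans[OF m(1)[symmetric] sk] that] .
  then have "sum m {1..r} = sum k {1..r} - c"
    using j by (simp add: sum_subtractf)
  with \<open>c \<ge> 1\<close> have "sum m {1..r} < sum k {1..r}"
    by linarith
  with m show ?thesis
    by (rule that)
qed

text \<open>Induction on the height of \<open>b\<close>, using \<open>s\<^sub>b = s\<^sub>j s\<^bsub>s\<^sub>j b\<^esub> s\<^sub>j\<close>.\<close>
lemma sref_pos_root_simple_word:
  assumes "b \<in> Pos"
  shows "\<exists>is. set is \<subseteq> {1..r} \<and> sref b = simple_word \<alpha> is"
proof -
  have height_induct: "\<exists>is. set is \<subseteq> {1..r} \<and> sref b = simple_word \<alpha> is"
    if "b \<in> Pos" "b = (\<Sum>j=1..r. of_int (k j) *\<^sub>R \<alpha> j)" "\<forall>j\<in>{1..r}. k j \<ge> 0"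
      "nat (sum k {1..r}) = n" for n b k
    using that
  proof (induction n arbitrary: b k rule: less_induct)
    case (less n b k)
    obtain j where j: "j \<in> {1..r}" and bj: "b \<bullet> \<alpha> j > 0"
      using pos_root_inner_simple_pos[OF less.prems(1)] .
    show ?case
    proof (cases "b = \<alpha> j")
      case True
      then show ?thesis
        using j by (intro exI[of _ "[j]"]) simp
    next
      case False
      define b' where "b' = sref (\<alpha> j) b"
      obtain m where m: "b' = (\<Sum>i=1..r. of_int (m i) *\<^sub>R \<alpha> i)" "\<forall>i\<in>{1..r}. m i \<ge> 0"
        and less_height: "sum m {1..r} < sum k {1..r}"
        unfolding b'_def using sref_simple_pos_root_height_less[OF j less.prems(1) False bj less.prems(2)] .
      have "0 \<le> sum m {1..r}"
        using m(2) by (intro sum_nonneg) auto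
      with less_height have "nat (sum m {1..r}) < n"
        using less.prems(4) by linarith
      moreover have "b' \<in> Pos"
        unfolding b'_def using sref_simple_pos_root[OF j less.prems(1) False] .
      ultimately obtain "is" where "is": "set is \<subseteq> {1..r}" "sref b' = simple_word \<alpha> is"
        using less.IH[OF _ _ m] by blast
      have "sref b = sref (\<alpha> j) \<circ> sref b' \<circ> sref (\<alpha> j)"
        using sref_sref_conj[of "\<alpha> j" b'] by (simp add: b'_def)
      then show ?thesis
        using "is" j by (intro exI[of _ "j # is @ [j]"]) (simp add: simple_word_append comp_assoc)
    qed
  qed
  obtain k where "b = (\<Sum>j=1..r. of_int (k j) *\<^sub>R \<alpha> j)" "\<forall>j\<in>{1..r}. k j \<ge> 0"
    using assms by (rule pos_rootsE)
  then show ?thesis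
    using height_induct assms by blast
qed

lemma sref_root_simple_word: "b \<in> \<Phi> \<Longrightarrow> \<exists>is. set is \<subseteq> {1..r} \<and> sref b = simple_word \<alpha> is"
  using root_pos_or_neg sref_pos_root_simple_word sref_uminus by metis

lemma weyl_group_simple_word: "w \<in> W \<Longrightarrow> \<exists>is. set is \<subseteq> {1..r} \<and> w = simple_word \<alpha> is"
proof (induction rule: weyl_group.induct)
  case id_in
  show ?case
    by (intro exI[of _ "[]"]) simp
next
  case (refl_in w b)
  then obtain "is" js where "set is \<subseteq> {1..r}" "w = simple_word \<alpha> is"
    and "set js \<subseteq> {1..r}" "sref b = simple_word \<alpha> js"
    using sref_root_simple_word by blast
  then show ?case
    by (intro exI[of _ "is @ js"]) (simp add: simple_word_append)
qed

lemma simple_word_sref_deletion: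
  assumes "set is \<subseteq> {1..r}" and d: "d \<in> Pos" and "- simple_word \<alpha> is d \<in> Pos"
  shows "\<exists>j < length is. simple_word \<alpha> is \<circ> sref d = simple_word \<alpha> (take j is @ drop (Suc j) is)"
  using assms(1,3)
proof (induction "is")
  case Nil
  then show ?case
    using pos_root_uminus_not_pos[OF d] by simp
next
  case (Cons i "is")
  have i: "i \<in> {1..r}" and "is": "set is \<subseteq> {1..r}"
    using Cons.prems(1) by auto
  show ?case
  proof (cases "- simple_word \<alpha> is d \<in> Pos")
    case True
    then obtain j where "j < length is"
      and eq: "simple_word \<alpha> is \<circ> sref d = simple_word \<alpha> (take j is @ drop (Suc j) is)"
      using Cons.IH[OF "is"] by blast
    moreover have "simple_word \<alpha> (i # is) \<circ> sref d
        = simple_word \<alpha> (take (Suc j) (i # is) @ drop (Suc (Suc j)) (i # is))"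
      by (simp only: simple_word_Cons comp_assoc eq take_Suc_Cons drop_Suc_Cons append_Cons)
    moreover have "Suc j < length (i # is)"
      using \<open>j < length is\<close> by simp
    ultimately show ?thesis
      by blast
  next
    case False
    have "simple_word \<alpha> is d \<in> Pos"
      using False root_pos_or_neg[OF simple_word_root[OF "is" pos_root_root[OF d]]] by blast
    moreover have "sref (\<alpha> i) (simple_word \<alpha> is d) \<notin> Pos"
    proof
      assume "sref (\<alpha> i) (simple_word \<alpha> is d) \<in> Pos"
      then have "- sref (\<alpha> i) (simple_word \<alpha> is d) \<notin> Pos"
        by (rule pos_root_uminus_not_pos)
      then show False
        using Cons.prems(2) by simp
    qed
    ultimately have "simple_word \<alpha> is d = \<alpha> i"
      using sref_simple_pos_root[OF i] by blast
    then have "simple_word \<alpha> (i # is) \<circ> sref d = simple_word \<alpha> (take 0 (i # is) @ drop (Suc 0) (i # is))"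
      by (simp only: simple_word_Cons_comp_sref take_0 drop_Suc_Cons drop_0 append_Nil)
    moreover have "0 < length (i # is)"
      by simp
    ultimately show ?thesis
      by blast
  qed
qed

lemma weyl_length_reduced_word:
  assumes "w \<in> W"
  obtains "is" where "set is \<subseteq> {1..r}" and "w = simple_word \<alpha> is" and "length is = L w"
proof -
  have "\<exists>n is. length is = n \<and> set is \<subseteq> {1..r} \<and> w = simple_word \<alpha> is"
    using weyl_group_simple_word[OF assms] by blast
  from LeastI_ex[OF this] show ?thesis
    using that unfolding weyl_length_def by blast
qed

lemma weyl_length_sref_less:
  assumes w: "w \<in> W" and d: "d \<in> Pos" and neg: "- w d \<in> Pos"
  shows "L (w \<circ> sref d) < L w"
proof -
  obtain "is" where "is": "set is \<subseteq> {1..r}" "w = simple_word \<alpha> is" "length is = L w"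
    using weyl_length_reduced_word[OF w] .
  then obtain j where j: "j < length is"
    and del: "w \<circ> sref d = simple_word \<alpha> (take j is @ drop (Suc j) is)"
    using simple_word_sref_deletion[OF _ d] neg by blast
  have "set (take j is @ drop (Suc j) is) \<subseteq> {1..r}"
    using "is"(1) set_take_subset[of j "is"] set_drop_subset[of "Suc j" "is"] by auto
  from weyl_length_le[OF this] have "L (w \<circ> sref d) \<le> length is - 1"
    using j by (simp add: del)
  then show ?thesis
    using j "is"(3) by linarith
qed

lemma weyl_length_sref_less_iff:
  assumes w: "w \<in> W" and d: "d \<in> Pos"
  shows "L (w \<circ> sref d) < L w \<longleftrightarrow> - w d \<in> Pos"
proof
  assume less: "L (w \<circ> sref d) < L w"
  show "- w d \<in> Pos"
  proof (rule ccontr)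
    assume "- w d \<notin> Pos"
    then have "- (w \<circ> sref d) d \<in> Pos"
      using root_pos_or_neg[OF weyl_group_root[OF w pos_root_root[OF d]]]
        sref_self[OF root_nonzero[OF pos_root_root[OF d]]]
        linear_neg[OF orthogonal_transformation_linear[OF orthogonal_transformation_weyl_group[OF w]]]
      by auto
    then have "L (w \<circ> sref d \<circ> sref d) < L (w \<circ> sref d)"
      by (rule weyl_length_sref_less[OF weyl_group.refl_in[OF w pos_root_root[OF d]] d])
    then show False
      using less by (simp add: comp_assoc)
  qed
qed (rule weyl_length_sref_less[OF w d])

lemma weyl_length_sref_simple_le:
  assumes "w \<in> W" and "i \<in> {1..r}"
  shows "L (w \<circ> sref (\<alpha> i)) \<le> L w + 1"
proof -
  obtain "is" where "set is \<subseteq> {1..r}" "w = simple_word \<alpha> is" "length is = L w"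
    using weyl_length_reduced_word[OF assms(1)] .
  then show ?thesis
    using weyl_length_le[of "is @ [i]" r \<alpha>] assms(2)
    by (simp add: simple_word_append)
qed

lemma weyl_length_sref_simple_cases:
  assumes w: "w \<in> W" and i: "i \<in> {1..r}"
  shows "L (w \<circ> sref (\<alpha> i)) = L w + 1 \<or> L (w \<circ> sref (\<alpha> i)) + 1 = L w"
proof -
  let ?v = "w \<circ> sref (\<alpha> i)"
  have v: "?v \<in> W"
    using weyl_group.refl_in[OF w simple_root[OF i]] .
  have "?v (\<alpha> i) = - w (\<alpha> i)"
    using sref_self[OF simple_root_nonzero[OF i]]
      linear_neg[OF orthogonal_transformation_linear[OF orthogonal_transformation_weyl_group[OF w]]]
    by simp
  then have up: "L w < L ?v \<longleftrightarrow> w (\<alpha> i) \<in> Pos"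
    using weyl_length_sref_less_iff[OF v simple_root_pos[OF i]] by (simp add: comp_assoc)
  have down: "L ?v < L w \<longleftrightarrow> - w (\<alpha> i) \<in> Pos"
    using weyl_length_sref_less_iff[OF w simple_root_pos[OF i]] .
  have "L ?v \<le> L w + 1" "L w \<le> L ?v + 1"
    using weyl_length_sref_simple_le[OF w i] weyl_length_sref_simple_le[OF v i] by (simp_all add: comp_assoc)
  moreover have "w (\<alpha> i) \<in> Pos \<or> - w (\<alpha> i) \<in> Pos"
    using root_pos_or_neg[OF weyl_group_root[OF w simple_root[OF i]]] .
  ultimately show ?thesis
    using up down by linarith
qed

text \<open>The conjugate \<open>s\<^sub>i s\<^sub>g s\<^sub>i = s\<^bsub>s\<^sub>i g\<^esub>\<close> is again the reflection in a root of the same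
  sign, so right multiplication by it shortens \<open>w s\<^sub>i\<close> exactly when \<open>s\<^sub>g\<close> shortens \<open>w\<close>.\<close>
lemma weyl_length_conj_sref_less_iff:
  assumes w: "w \<in> W" and i: "i \<in> {1..r}" and g: "g \<in> \<Phi>" "g \<noteq> \<alpha> i" "g \<noteq> - \<alpha> i"
  shows "L (w \<circ> sref g \<circ> sref (\<alpha> i)) < L (w \<circ> sref (\<alpha> i)) \<longleftrightarrow> L (w \<circ> sref g) < L w"
proof -
  obtain p where p: "p \<in> Pos" "p \<noteq> \<alpha> i" and sp: "sref p = sref g"
    using root_pos_or_neg[OF g(1)] g(2,3) by (metis minus_minus sref_uminus)
  let ?s = "sref (\<alpha> i)"
  have "w \<circ> ?s \<circ> sref (?s p) = w \<circ> sref p \<circ> ?s"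
    by (rule comp_sref_sref_conj)
  moreover have "(w \<circ> ?s) (?s p) = w p"
    by simp
  ultimately have "L (w \<circ> sref p \<circ> ?s) < L (w \<circ> ?s) \<longleftrightarrow> - w p \<in> Pos"
    using weyl_length_sref_less_iff[OF weyl_group.refl_in[OF w simple_root[OF i]]
        sref_simple_pos_root[OF i p]] by simp
  also have "\<dots> \<longleftrightarrow> L (w \<circ> sref p) < L w"
    using weyl_length_sref_less_iff[OF w p(1)] by simp
  finally show ?thesis
    unfolding sp .
qed

section \<open>The Weyl vector\<close>

lemma span_simple_roots: "span (\<alpha> ` {1..r}) = UNIV"
proof -
  have "\<Phi> \<subseteq> span (\<alpha> ` {1..r})"
  proof
    fix b
    assume "b \<in> \<Phi>"
    then obtain k where k: "b = (\<Sum>j=1..r. of_int (k j) *\<^sub>R \<alpha> j)"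
      using root_simple_coeffs by blast
    show "b \<in> span (\<alpha> ` {1..r})"
      unfolding k by (intro span_sum span_scale span_base) auto
  qed
  then have "span \<Phi> \<subseteq> span (\<alpha> ` {1..r})"
    by (rule span_minimal) (rule subspace_span)
  then show ?thesis
    using root_system by (auto simp: root_system_def)
qed

lemma coroot_pairings_unique:
  assumes "\<forall>j\<in>{1..r}. \<omega> \<bullet> coroot (\<alpha> j) = f j" and "\<forall>j\<in>{1..r}. \<omega>' \<bullet> coroot (\<alpha> j) = f j"
  shows "\<omega> = \<omega>'"
proof -
  have "orthogonal (\<omega> - \<omega>') y" if y: "y \<in> \<alpha> ` {1..r}" for y
  proof -
    obtain j where j: "j \<in> {1..r}" "y = \<alpha> j"
      using y by blast
    have "(\<omega> - \<omega>') \<bullet> coroot (\<alpha> j) = 0"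
      using assms j(1) by (simp add: inner_diff_left)
    then have "(2 / (\<alpha> j \<bullet> \<alpha> j)) * ((\<omega> - \<omega>') \<bullet> \<alpha> j) = 0"
      by (simp add: coroot_def)
    then show ?thesis
      using simple_root_nonzero[OF j(1)] j(2) by (simp add: orthogonal_def)
  qed
  then have "orthogonal (\<omega> - \<omega>') (\<omega> - \<omega>')"
    using orthogonal_to_span span_simple_roots by blast
  then show ?thesis
    by (simp add: orthogonal_def)
qed

lemma dual_weight_exists:
  assumes k: "k \<in> {1..r}"
  shows "\<exists>\<omega>. \<forall>j\<in>{1..r}. \<omega> \<bullet> coroot (\<alpha> j) = (if k = j then 1 else 0)"
proof
  define B where "B = \<alpha> ` {1..r}"
  have B: "independent B" "span B = UNIV"
    using simple_roots_independent span_simple_roots by (auto simp: B_def)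
  define \<phi> where "\<phi> x = (\<alpha> k \<bullet> \<alpha> k / 2) * representation B x (\<alpha> k)" for x
  have "linear \<phi>"
    by (rule linearI) (simp_all add: \<phi>_def B representation_add representation_scale algebra_simps)
  define \<omega> where "\<omega> = adjoint \<phi> 1"
  have \<omega>: "\<omega> \<bullet> x = \<phi> x" for x
    using adjoint_works[OF \<open>linear \<phi>\<close>, of x 1] by (simp add: \<omega>_def inner_commute)
  show "\<forall>j\<in>{1..r}. \<omega> \<bullet> coroot (\<alpha> j) = (if k = j then 1 else 0)"
  proof
    fix j
    assume j: "j \<in> {1..r}"
    have "representation B (\<alpha> j) (\<alpha> k) = (if k = j then 1 else 0)"
      using representation_basis[OF B(1), of "\<alpha> j"] inj_onD[OF simple_roots_inj _ k j] j
      by (auto simp: B_def)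
    moreover have "\<omega> \<bullet> coroot (\<alpha> j) = (2 / (\<alpha> j \<bullet> \<alpha> j)) * \<phi> (\<alpha> j)"
      by (simp add: coroot_def \<omega>[symmetric])
    ultimately show "\<omega> \<bullet> coroot (\<alpha> j) = (if k = j then 1 else 0)"
      using simple_root_nonzero[OF j] by (simp add: \<phi>_def)
  qed
qed

lemma fund_weight_coroot:
  assumes "k \<in> {1..r}" and "j \<in> {1..r}"
  shows "fund_weight \<alpha> r k \<bullet> coroot (\<alpha> j) = (if k = j then 1 else 0)"
proof -
  obtain \<omega> where \<omega>: "\<forall>j\<in>{1..r}. \<omega> \<bullet> coroot (\<alpha> j) = (if k = j then 1 else 0)"
    using dual_weight_exists[OF assms(1)] by blast
  have "\<exists>!\<omega>. \<forall>j\<in>{1..r}. \<omega> \<bullet> coroot (\<alpha> j) = (if k = j then 1 else 0)"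
  proof (rule ex1I[of _ \<omega>])
    fix \<omega>'
    assume "\<forall>j\<in>{1..r}. \<omega>' \<bullet> coroot (\<alpha> j) = (if k = j then 1 else 0)"
    then show "\<omega>' = \<omega>"
      by (rule coroot_pairings_unique[OF _ \<omega>])
  qed (rule \<omega>)
  from theI'[OF this] show ?thesis
    using assms(2) unfolding fund_weight_def by blast
qed

abbreviation rho_coroot :: "'a \<Rightarrow> real" where
  "rho_coroot b \<equiv> rho \<alpha> r \<bullet> coroot b"

lemma rho_coroot_simple: "i \<in> {1..r} \<Longrightarrow> rho_coroot (\<alpha> i) = 1"
  by (simp add: rho_def inner_sum_left fund_weight_coroot)

lemma rho_coroot_sref_simple:
  assumes i: "i \<in> {1..r}"
  shows "rho_coroot (sref (\<alpha> i) g) = rho_coroot g - coroot g \<bullet> \<alpha> i"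
proof -
  have "coroot (sref (\<alpha> i) g) = sref (\<alpha> i) (coroot g)"
    by (rule coroot_orthogonal_transformation[OF orthogonal_transformation_sref])
  then have "rho_coroot (sref (\<alpha> i) g)
      = rho_coroot g - (coroot g \<bullet> coroot (\<alpha> i)) * (rho \<alpha> r \<bullet> \<alpha> i)"
    by (simp add: sref_def inner_diff_right)
  also have "(coroot g \<bullet> coroot (\<alpha> i)) * (rho \<alpha> r \<bullet> \<alpha> i) = (coroot g \<bullet> \<alpha> i) * rho_coroot (\<alpha> i)"
    by (simp add: coroot_def mult_ac)
  finally show ?thesis
    using rho_coroot_simple[OF i] by simp
qed

text \<open>This matches the exponents of the monomials on the two sides of (c).\<close>
lemma sref_simple_exponent:
  assumes "i \<in> {1..r}"
  shows "\<alpha> i + - (rho_coroot g *\<^sub>R g) + sref g (- \<alpha> i) = - (rho_coroot (sref (\<alpha> i) g) *\<^sub>R g)"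
proof -
  have "\<alpha> i + - (rho_coroot g *\<^sub>R g) + sref g (- \<alpha> i) = - ((rho_coroot g - coroot g \<bullet> \<alpha> i) *\<^sub>R g)"
    by (simp add: sref_def algebra_simps inner_commute)
  then show ?thesis
    by (simp only: rho_coroot_sref_simple[OF assms])
qed

section \<open>The operators on the basis\<close>

abbreviation "T \<equiv> Top \<Phi> \<alpha> r"
abbreviation "R \<equiv> Rop \<Phi> \<alpha> r"

definition Xop_coeff :: "('a \<Rightarrow> 'a) \<Rightarrow> 'a \<Rightarrow> 'a coeff" where
  "Xop_coeff v \<mu> = xmon ((1 / coxeter_number \<Phi> \<alpha> r) *\<^sub>R v \<mu>)"

definition root_sign :: "'a \<Rightarrow> 'a coeff" where
  "root_sign b = (if b \<in> Pos then 1 else -1)"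

lemma Xop_coeff_add: "linear v \<Longrightarrow> Xop_coeff v (\<mu> + \<nu>) = Xop_coeff v \<mu> * Xop_coeff v \<nu>"
  by (simp add: Xop_coeff_def xmon_def mult_single linear_add scaleR_add_right)

lemma Xop_coeff_comp: "Xop_coeff (v \<circ> f) \<mu> = Xop_coeff v (f \<mu>)"
  by (simp add: Xop_coeff_def)

lemma root_sign_sref_simple:
  assumes "i \<in> {1..r}" and "b \<in> \<Phi>" and "b \<noteq> \<alpha> i" and "b \<noteq> - \<alpha> i"
  shows "root_sign (sref (\<alpha> i) b) = root_sign b"
  using sref_simple_pos_root_iff[OF assms] by (simp add: root_sign_def)

lemma Xop_cbasis:
  assumes "finite W" and "v \<in> W"
  shows "Xop \<Phi> \<alpha> r \<mu> (cbasis c v) = cbasis (c * Xop_coeff v \<mu>) v"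
  unfolding Xop_def Xop_coeff_def by (simp only: lin_ext_cbasis[OF assms] cbasis_mult)

lemma Bop_cbasis:
  assumes W: "finite W" "v \<in> W"
  shows "Bop \<Phi> \<alpha> r b (cbasis c v)
    = (if L (v \<circ> sref b) + 1 = L v then cbasis (root_sign b * c) (v \<circ> sref b) else 0)"
proof -
  have "Bpos \<Phi> \<alpha> r \<gamma> (cbasis c v)
      = (if L (v \<circ> sref \<gamma>) + 1 = L v then cbasis c (v \<circ> sref \<gamma>) else 0)" for \<gamma>
    unfolding Bpos_def lin_ext_cbasis[OF W]
    by (cases "L (v \<circ> sref \<gamma>) + 1 = L v") (simp_all add: cbasis_mult zero_fun_def)
  then show ?thesis
    by (simp add: Bop_def root_sign_def cbasis_uminus)
qed

lemma Rop_cbasis: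
  assumes W: "finite W" "v \<in> W" and b: "b \<in> \<Phi>"
  shows "R b (cbasis c v) = cbasis (c * Xop_coeff v b) v
     + (if L (v \<circ> sref b) + 1 = L v
        then cbasis (root_sign b * c * Xop_coeff v (- (rho_coroot b *\<^sub>R b))) (v \<circ> sref b) else 0)"
proof -
  have "v \<circ> sref b \<in> W"
    using weyl_group.refl_in[OF W(2) b] .
  moreover have "Xop_coeff (v \<circ> sref b) (rho_coroot b *\<^sub>R b) = Xop_coeff v (- (rho_coroot b *\<^sub>R b))"
    using sref_self[OF root_nonzero[OF b]] by (simp add: Xop_coeff_comp linear_cmul[OF linear_sref])
  ultimately show ?thesis
    by (simp add: Rop_def Bop_cbasis[OF W] Xop_cbasis[OF W] Xop_cbasis[OF W(1)]
        is_lin_ext_if_zero_apply[OF is_lin_ext_Xop])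
qed

lemma Top_cbasis:
  assumes W: "finite W" "v \<in> W" and i: "i \<in> {1..r}"
  shows "T i (cbasis c v)
    = (if L (v \<circ> sref (\<alpha> i)) = L v + 1 then cbasis c (v \<circ> sref (\<alpha> i)) else cbasis c v)"
  using weyl_length_sref_simple_cases[OF W(2) i]
  unfolding Top_def lin_ext_cbasis[OF W]
  by (cases "L (v \<circ> sref (\<alpha> i)) = L v + 1") (simp_all add: cbasis_mult)

lemma Top_Rop_neg_simple_cbasis:
  assumes W: "finite W" "v \<in> W" and i: "i \<in> {1..r}"
  shows "T i (R (- \<alpha> i) (cbasis c v))
    = (if L (v \<circ> sref (\<alpha> i)) = L v + 1 then cbasis (c * Xop_coeff v (- \<alpha> i)) (v \<circ> sref (\<alpha> i)) else 0)"
proof -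
  let ?s = "sref (\<alpha> i)"
  have vs: "v \<circ> ?s \<in> W"
    using weyl_group.refl_in[OF W(2) simple_root[OF i]] .
  have "root_sign (- \<alpha> i) = -1" "- (rho_coroot (- \<alpha> i) *\<^sub>R - \<alpha> i) = - \<alpha> i"
    using neg_simple_root_not_pos[OF i] rho_coroot_simple[OF i] by (simp_all add: root_sign_def)
  then have Rneg: "R (- \<alpha> i) (cbasis c v) = cbasis (c * Xop_coeff v (- \<alpha> i)) v
     + (if L (v \<circ> ?s) + 1 = L v then cbasis (- (c * Xop_coeff v (- \<alpha> i))) (v \<circ> ?s) else 0)"
    using Rop_cbasis[OF W uminus_root[OF simple_root[OF i]], of c] by simp
  show ?thesis
  proof (cases "L (v \<circ> ?s) = L v + 1")
    case True
    then show ?thesis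
      by (simp add: Rneg is_lin_ext_add_apply[OF is_lin_ext_Top] Top_cbasis[OF W i])
  next
    case False
    then have "L (v \<circ> ?s) + 1 = L v" "L (v \<circ> ?s \<circ> ?s) = L (v \<circ> ?s) + 1"
      using weyl_length_sref_simple_cases[OF W(2) i] by (simp_all add: comp_assoc)
    with False show ?thesis
      by (simp add: Rneg is_lin_ext_add_apply[OF is_lin_ext_Top] Top_cbasis[OF W i]
          Top_cbasis[OF W(1) vs i] comp_assoc cbasis_add)
  qed
qed

lemma Rop_simple_Top_cbasis:
  assumes W: "finite W" "w \<in> W" and i: "i \<in> {1..r}"
  shows "R (\<alpha> i) (T i (cbasis 1 w)) = T i (R (- \<alpha> i) (cbasis 1 w)) + R (\<alpha> i) (cbasis 1 w)"
proof (cases "L (w \<circ> sref (\<alpha> i)) = L w + 1")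
  case True
  let ?s = "sref (\<alpha> i)"
  have "w \<circ> ?s \<in> W"
    using weyl_group.refl_in[OF W(2) simple_root[OF i]] .
  moreover have "root_sign (\<alpha> i) = 1"
    using simple_root_pos[OF i] by (simp add: root_sign_def)
  moreover have "L (w \<circ> ?s \<circ> ?s) + 1 = L (w \<circ> ?s)"
    using True by (simp add: comp_assoc)
  ultimately show ?thesis
    using True W(2) sref_self[OF simple_root_nonzero[OF i]]
    by (simp add: Top_Rop_neg_simple_cbasis[OF W i] Top_cbasis[OF W i] Rop_cbasis[OF W(1) _ simple_root[OF i]]
        rho_coroot_simple[OF i] Xop_coeff_comp comp_assoc linear_neg[OF linear_sref] add.commute)
next
  case False
  then show ?thesis
    by (simp add: Top_Rop_neg_simple_cbasis[OF W i] Top_cbasis[OF W i])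
qed

lemma Rop_neg_simple_Top_cbasis:
  assumes W: "finite W" "w \<in> W" and i: "i \<in> {1..r}"
  shows "R (- \<alpha> i) (T i (cbasis 1 w)) = T i (R (\<alpha> i) (cbasis 1 w)) - R (\<alpha> i) (cbasis 1 w)"
proof -
  let ?s = "sref (\<alpha> i)"
  have ws: "w \<circ> ?s \<in> W"
    using weyl_group.refl_in[OF W(2) simple_root[OF i]] .
  have signs: "root_sign (\<alpha> i) = 1" "root_sign (- \<alpha> i) = -1"
    using simple_root_pos[OF i] neg_simple_root_not_pos[OF i] by (simp_all add: root_sign_def)
  have s: "?s (\<alpha> i) = - \<alpha> i" "?s (- \<alpha> i) = \<alpha> i"
    using sref_self[OF simple_root_nonzero[OF i]] by (simp_all add: linear_neg[OF linear_sref])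
  note Ra = Rop_cbasis[OF W(1) _ simple_root[OF i]]
  note Rn = Rop_cbasis[OF W(1) _ uminus_root[OF simple_root[OF i]], unfolded sref_uminus]
  show ?thesis
  proof (cases "L (w \<circ> ?s) = L w + 1")
    case True
    then have "L (w \<circ> ?s \<circ> ?s) + 1 = L (w \<circ> ?s)"
      by (simp add: comp_assoc)
    with True show ?thesis
      using W(2) ws
      by (simp add: Top_cbasis[OF W i] Ra Rn signs s rho_coroot_simple[OF i] Xop_coeff_comp comp_assoc
          cbasis_uminus[symmetric])
  next
    case False
    then have down: "L (w \<circ> ?s) + 1 = L w" "L (w \<circ> ?s \<circ> ?s) = L (w \<circ> ?s) + 1"
      using weyl_length_sref_simple_cases[OF W(2) i] by (simp_all add: comp_assoc)
    have "T i (R (\<alpha> i) (cbasis 1 w)) = cbasis (Xop_coeff w (\<alpha> i)) w + cbasis (Xop_coeff w (- \<alpha> i)) w"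
      using False down W(2) ws
      by (simp add: Ra signs rho_coroot_simple[OF i] is_lin_ext_add_apply[OF is_lin_ext_Top]
          Top_cbasis[OF W i] Top_cbasis[OF W(1) ws i] comp_assoc)
    moreover have "R (- \<alpha> i) (T i (cbasis 1 w))
        = cbasis (Xop_coeff w (- \<alpha> i)) w + cbasis (- Xop_coeff w (- \<alpha> i)) (w \<circ> ?s)"
      using False down W(2)
      by (simp add: Top_cbasis[OF W i] Rn signs rho_coroot_simple[OF i])
    moreover have "R (\<alpha> i) (cbasis 1 w) = cbasis (Xop_coeff w (\<alpha> i)) w + cbasis (Xop_coeff w (- \<alpha> i)) (w \<circ> ?s)"
      using down W(2) by (simp add: Ra signs rho_coroot_simple[OF i])
    ultimately show ?thesis
      by (simp add: cbasis_uminus[symmetric] algebra_simps)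
  qed
qed

lemma weyl_length_conj_sref_up_iff:
  assumes w: "w \<in> W" and i: "i \<in> {1..r}" and g: "g \<in> \<Phi>" "g \<noteq> \<alpha> i" "g \<noteq> - \<alpha> i"
    and up: "L (w \<circ> sref (\<alpha> i)) = L w + 1"
  shows "L (w \<circ> sref g \<circ> sref (\<alpha> i)) + 1 = L (w \<circ> sref (\<alpha> i))
    \<longleftrightarrow> L (w \<circ> sref g) + 1 = L w \<and> L (w \<circ> sref g \<circ> sref (\<alpha> i)) = L (w \<circ> sref g) + 1"
proof -
  consider "L (w \<circ> sref g \<circ> sref (\<alpha> i)) = L (w \<circ> sref g) + 1"
    | "L (w \<circ> sref g \<circ> sref (\<alpha> i)) + 1 = L (w \<circ> sref g)"
    using weyl_length_sref_simple_cases[OF weyl_group.refl_in[OF w g(1)] i] by blast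
  then show ?thesis
    using weyl_length_conj_sref_less_iff[OF w i g] up by cases auto
qed

lemma weyl_length_conj_sref_down:
  assumes w: "w \<in> W" and i: "i \<in> {1..r}" and g: "g \<in> \<Phi>" "g \<noteq> \<alpha> i" "g \<noteq> - \<alpha> i"
    and down: "L (w \<circ> sref (\<alpha> i)) + 1 = L w"
  shows "\<not> (L (w \<circ> sref g) + 1 = L w \<and> L (w \<circ> sref g \<circ> sref (\<alpha> i)) = L (w \<circ> sref g) + 1)"
  using weyl_length_conj_sref_less_iff[OF w i g] down by auto

lemma Xop_coeff_conj_exponent:
  assumes "linear v" and "i \<in> {1..r}"
  shows "Xop_coeff v (\<alpha> i) * Xop_coeff v (- (rho_coroot g *\<^sub>R g)) * Xop_coeff (v \<circ> sref g) (- \<alpha> i)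
    = Xop_coeff v (- (rho_coroot (sref (\<alpha> i) g) *\<^sub>R g))"
  by (simp only: Xop_coeff_comp Xop_coeff_add[OF assms(1), symmetric] sref_simple_exponent[OF assms(2)])

lemma Top_Rop_neg_simple_add: "T i (R (- \<alpha> i) (F + G)) = T i (R (- \<alpha> i) F) + T i (R (- \<alpha> i) G)"
  by (simp only: is_lin_ext_add_apply[OF is_lin_ext_Rop] is_lin_ext_add_apply[OF is_lin_ext_Top])

lemma Top_Rop_neg_simple_if_zero:
  "T i (R (- \<alpha> i) (if C then F else 0)) = (if C then T i (R (- \<alpha> i) F) else 0)"
  by (simp only: is_lin_ext_if_zero_apply[OF is_lin_ext_Rop] is_lin_ext_if_zero_apply[OF is_lin_ext_Top])

lemma Rop_conj_Top_cbasis_up: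
  assumes W: "finite W" "w \<in> W" and i: "i \<in> {1..r}" and g: "g \<in> \<Phi>" "g \<noteq> \<alpha> i" "g \<noteq> - \<alpha> i"
    and up: "L (w \<circ> sref (\<alpha> i)) = L w + 1"
  shows "R (sref (\<alpha> i) g) (T i (cbasis 1 w)) = T i (R (- \<alpha> i) (R g (R (\<alpha> i) (cbasis 1 w))))"
proof -
  let ?s = "sref (\<alpha> i)"
  define b where "b = ?s g"
  have b: "b \<in> \<Phi>" "?s b = g"
    using sref_root[OF simple_root[OF i] g(1)] by (simp_all add: b_def)
  have ws: "w \<circ> ?s \<in> W" and wg: "w \<circ> sref g \<in> W"
    using weyl_group.refl_in[OF W(2)] simple_root[OF i] g(1) by auto
  have lin: "linear w"
    using orthogonal_transformation_linear[OF orthogonal_transformation_weyl_group[OF W(2)]] .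
  have conj: "w \<circ> ?s \<circ> sref b = w \<circ> sref g \<circ> ?s"
    unfolding b_def by (rule comp_sref_sref_conj)
  have lhs: "R b (T i (cbasis 1 w)) = cbasis (Xop_coeff (w \<circ> ?s) b) (w \<circ> ?s)
     + (if L (w \<circ> ?s \<circ> sref b) + 1 = L (w \<circ> ?s)
        then cbasis (root_sign b * Xop_coeff (w \<circ> ?s) (- (rho_coroot b *\<^sub>R b))) (w \<circ> ?s \<circ> sref b) else 0)"
    using up by (simp add: Top_cbasis[OF W i] Rop_cbasis[OF W(1) ws b(1)])
  have rhs: "T i (R (- \<alpha> i) (R g (R (\<alpha> i) (cbasis 1 w))))
    = cbasis (Xop_coeff w (\<alpha> i) * Xop_coeff w g * Xop_coeff w (- \<alpha> i)) (w \<circ> ?s)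
     + (if L (w \<circ> sref g) + 1 = L w then
         (if L (w \<circ> sref g \<circ> ?s) = L (w \<circ> sref g) + 1
          then cbasis (root_sign g * Xop_coeff w (\<alpha> i) * Xop_coeff w (- (rho_coroot g *\<^sub>R g))
            * Xop_coeff (w \<circ> sref g) (- \<alpha> i)) (w \<circ> sref g \<circ> ?s)
          else 0) else 0)"
    using up W(2) wg
    by (simp add: Rop_cbasis[OF W(1) _ simple_root[OF i]] Rop_cbasis[OF W(1) _ g(1)]
        Top_Rop_neg_simple_add Top_Rop_neg_simple_if_zero Top_Rop_neg_simple_cbasis[OF W(1) _ i])
  have "Xop_coeff w (\<alpha> i) * Xop_coeff w g * Xop_coeff w (- \<alpha> i) = Xop_coeff (w \<circ> ?s) b"
    by (simp add: Xop_coeff_add[OF lin, symmetric] Xop_coeff_comp b(2))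
  moreover have "root_sign g * Xop_coeff w (\<alpha> i) * Xop_coeff w (- (rho_coroot g *\<^sub>R g)) * Xop_coeff (w \<circ> sref g) (- \<alpha> i)
      = root_sign b * Xop_coeff (w \<circ> ?s) (- (rho_coroot b *\<^sub>R b))"
    using Xop_coeff_conj_exponent[OF lin i, of g] root_sign_sref_simple[OF i g] b(2)
    by (simp add: mult.assoc Xop_coeff_comp b_def linear_neg[OF linear_sref] linear_cmul[OF linear_sref])
  moreover have "L (w \<circ> ?s \<circ> sref b) + 1 = L (w \<circ> ?s)
      \<longleftrightarrow> L (w \<circ> sref g) + 1 = L w \<and> L (w \<circ> sref g \<circ> ?s) = L (w \<circ> sref g) + 1"
    unfolding conj using weyl_length_conj_sref_up_iff[OF W(2) i g up] .
  ultimately show ?thesis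
    unfolding b_def[symmetric] lhs rhs conj by simp
qed

lemma Top_Rop_neg_simple_Rop_cbasis_down:
  assumes W: "finite W" "w \<in> W" and i: "i \<in> {1..r}" and g: "g \<in> \<Phi>" "g \<noteq> \<alpha> i" "g \<noteq> - \<alpha> i"
    and down: "L (w \<circ> sref (\<alpha> i)) + 1 = L w"
  shows "T i (R (- \<alpha> i) (R g (cbasis c w))) = 0"
  using down W(2) weyl_group.refl_in[OF W(2) g(1)] weyl_length_conj_sref_down[OF W(2) i g down]
  by (simp add: Rop_cbasis[OF W(1) _ g(1)] Top_Rop_neg_simple_add Top_Rop_neg_simple_if_zero
      Top_Rop_neg_simple_cbasis[OF W(1) _ i])

text \<open>Writing \<open>w = v s\<^sub>i\<close> with \<open>v\<close> ascending, identity (a) at \<open>v\<close> and the previous lemma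
  reduce this to the ascending case at \<open>v\<close>.\<close>
lemma Rop_conj_Top_cbasis_down:
  assumes W: "finite W" "w \<in> W" and i: "i \<in> {1..r}" and g: "g \<in> \<Phi>" "g \<noteq> \<alpha> i" "g \<noteq> - \<alpha> i"
    and down: "L (w \<circ> sref (\<alpha> i)) + 1 = L w"
  shows "R (sref (\<alpha> i) g) (T i (cbasis 1 w)) = T i (R (- \<alpha> i) (R g (R (\<alpha> i) (cbasis 1 w))))"
proof -
  let ?s = "sref (\<alpha> i)"
  define v where "v = w \<circ> ?s"
  have v: "v \<in> W" and vs: "v \<circ> ?s = w"
    using weyl_group.refl_in[OF W(2) simple_root[OF i]] by (simp_all add: v_def comp_assoc)
  have up: "L (v \<circ> ?s) = L v + 1"
    using down by (simp add: v_def comp_assoc)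
  have Tv: "T i (cbasis 1 v) = cbasis 1 w"
    using up by (simp add: Top_cbasis[OF W(1) v i] vs)
  have Tw: "T i (cbasis 1 w) = cbasis 1 w"
    using down by (simp add: Top_cbasis[OF W i])
  have "T i (R (- \<alpha> i) (R g (R (\<alpha> i) (cbasis 1 w))))
      = T i (R (- \<alpha> i) (R g (T i (R (- \<alpha> i) (cbasis 1 v)))))
        + T i (R (- \<alpha> i) (R g (R (\<alpha> i) (cbasis 1 v))))"
    unfolding Tv[symmetric] Rop_simple_Top_cbasis[OF W(1) v i]
    by (simp only: is_lin_ext_add_apply[OF is_lin_ext_Rop] is_lin_ext_add_apply[OF is_lin_ext_Top])
  also have "\<dots> = T i (R (- \<alpha> i) (R g (R (\<alpha> i) (cbasis 1 v))))"
    using up by (simp add: Top_Rop_neg_simple_cbasis[OF W(1) v i] vs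
        Top_Rop_neg_simple_Rop_cbasis_down[OF W i g down])
  also have "\<dots> = R (?s g) (T i (cbasis 1 v))"
    by (rule Rop_conj_Top_cbasis_up[OF W(1) v i g up, symmetric])
  also have "\<dots> = R (?s g) (T i (cbasis 1 w))"
    by (simp only: Tv Tw)
  finally show ?thesis
    by (rule sym)
qed

lemma Rop_simple_comp_Top:
  assumes "i \<in> {1..r}"
  shows "R (\<alpha> i) \<circ> T i = (T i \<circ> R (- \<alpha> i)) + R (\<alpha> i)"
proof (rule is_lin_ext_eqI[where \<Phi> = \<Phi>])
  fix w
  assume "finite W" "w \<in> W"
  then show "(R (\<alpha> i) \<circ> T i) (cbasis 1 w) = ((T i \<circ> R (- \<alpha> i)) + R (\<alpha> i)) (cbasis 1 w)"
    using Rop_simple_Top_cbasis[OF _ _ assms] by simp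
qed (intro is_lin_ext_add is_lin_ext_comp is_lin_ext_Rop is_lin_ext_Top)+

lemma Rop_neg_simple_comp_Top:
  assumes "i \<in> {1..r}"
  shows "R (- \<alpha> i) \<circ> T i = (T i \<circ> R (\<alpha> i)) - R (\<alpha> i)"
proof (rule is_lin_ext_eqI[where \<Phi> = \<Phi>])
  fix w
  assume "finite W" "w \<in> W"
  then show "(R (- \<alpha> i) \<circ> T i) (cbasis 1 w) = ((T i \<circ> R (\<alpha> i)) - R (\<alpha> i)) (cbasis 1 w)"
    using Rop_neg_simple_Top_cbasis[OF _ _ assms] by simp
qed (intro is_lin_ext_diff is_lin_ext_comp is_lin_ext_Rop is_lin_ext_Top)+

lemma Rop_comp_Top:
  assumes i: "i \<in> {1..r}" and \<beta>: "\<beta> \<in> \<Phi>" "\<beta> \<noteq> \<alpha> i" "\<beta> \<noteq> - \<alpha> i"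
  shows "R \<beta> \<circ> T i = T i \<circ> R (- \<alpha> i) \<circ> R (sref (\<alpha> i) \<beta>) \<circ> R (\<alpha> i)"
proof (rule is_lin_ext_eqI[where \<Phi> = \<Phi>])
  let ?g = "sref (\<alpha> i) \<beta>"
  have g: "?g \<in> \<Phi>" "?g \<noteq> \<alpha> i" "?g \<noteq> - \<alpha> i"
    using sref_root[OF simple_root[OF i] \<beta>(1)] \<beta>(2,3) sref_self[OF simple_root_nonzero[OF i]]
    by (metis sref_sref)+
  fix w
  assume W: "finite W" "w \<in> W"
  show "(R \<beta> \<circ> T i) (cbasis 1 w) = (T i \<circ> R (- \<alpha> i) \<circ> R ?g \<circ> R (\<alpha> i)) (cbasis 1 w)"
    using weyl_length_sref_simple_cases[OF W(2) i]
      Rop_conj_Top_cbasis_up[OF W i g] Rop_conj_Top_cbasis_down[OF W i g]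
    by auto
qed (intro is_lin_ext_comp is_lin_ext_Rop is_lin_ext_Top)+

end

theorem proposition11p4:
  fixes \<Phi> :: "'a::euclidean_space set" and \<alpha> :: "nat \<Rightarrow> 'a" and r i :: nat and \<beta> :: 'a
  assumes "root_system \<Phi>" and "irreducible_rs \<Phi>" and "is_base \<Phi> \<alpha> r"
    and "i \<in> {1..r}" and "\<beta> \<in> \<Phi>"
  shows "(Rop \<Phi> \<alpha> r (\<alpha> i) \<circ> Top \<Phi> \<alpha> r i
           = (Top \<Phi> \<alpha> r i \<circ> Rop \<Phi> \<alpha> r (- \<alpha> i)) + Rop \<Phi> \<alpha> r (\<alpha> i))
       \<and> (Rop \<Phi> \<alpha> r (- \<alpha> i) \<circ> Top \<Phi> \<alpha> r i
           = (Top \<Phi> \<alpha> r i \<circ> Rop \<Phi> \<alpha> r (\<alpha> i)) - Rop \<Phi> \<alpha> r (\<alpha> i))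
       \<and> (\<beta> \<noteq> \<alpha> i \<and> \<beta> \<noteq> - \<alpha> i \<longrightarrow>
         Rop \<Phi> \<alpha> r \<beta> \<circ> Top \<Phi> \<alpha> r i
           = Top \<Phi> \<alpha> r i \<circ> Rop \<Phi> \<alpha> r (- \<alpha> i) \<circ> Rop \<Phi> \<alpha> r (sref (\<alpha> i) \<beta>) \<circ> Rop \<Phi> \<alpha> r (\<alpha> i))"
proof -
  interpret based_root_system \<Phi> \<alpha> r
    using assms(1,3) by unfold_locales
  show ?thesis
    using Rop_simple_comp_Top[OF assms(4)] Rop_neg_simple_comp_Top[OF assms(4)]
      Rop_comp_Top[OF assms(4,5)] by blast
qed

end
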